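(* Let $\alpha\neq0$ and $b<0$, consider the system $\dot x=u\alpha x$, $\dot y=by+ux$ on $G$, and let $\mathcal C=\bigcup_{u\in B}r_u$. Then: 1. If $b\notin\alpha\Omega=\{\alpha u:u\in\Omega\}$, then $\mathcal C=\{(x,y)\in G: m_{u_*}x\le y\le m_{u^*}x\}$. 2. If $b\in\alpha\Omega$, then $\mathcal C=\{(x,y)\in G: y\le m_{u^*}x\}$ when $\alpha>0$, and $\mathcal C=\{(x,y)\in G: y\ge m_{u_*}x\}$ when $\alpha<0$. 3. For any $u_1,u_2$ in the interior (in $\mathbb{R}$) of $B$ with $u_1\neq u_2$, there exist $t_0>0$ and $u\in\Omega$ such that $\varphi(t_0,r_{u_1},u)=r_{u_2}$. 4. $\mathcal C$ is positively invariant: $\varphi(t,p,u)\in\mathcal C$ for all $p\in\mathcal C$, $t\ge0$ and $u\in\mathcal U$.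
   Context: Let $G=\{(x,y)\in\mathbb{R}^2:x>0\}$. Fix $\Omega=[u_*,u^*]$ with $u_*<0<u^*$, and fix constants $\alpha\neq0$, $b<0$. The admissible controls $\mathcal U$ are the piecewise constant functions $\mathbb{R}\to\Omega$. Consider the system $\dot x=u\alpha x$, $\dot y=by+ux$ on $G$, with solutions $\varphi(t,p,u)$. For $u\in\mathbb{R}$ with $u\alpha\neq b$, set $m_u=\frac{u}{u\alpha-b}$ and define the ray $r_u=\{(x,y)\in G: y=m_ux\}$. Let $B=\{u\in\Omega: u\alpha-b>0\}$; this set is nonempty since $0\in B$. *)

theory Defs
  imports "HOL-Analysis.Analysis"
begin

definition G :: "(real \<times> real) set" where
  "G = {p. fst p > 0}"

definition Omega :: "real \<Rightarrow> real \<Rightarrow> real set" where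
  "Omega umin umax = {umin..umax}"

text \<open>Admissible controls: piecewise constant functions R -> Omega, i.e. on every
  bounded interval there are finitely many exceptional points, away from which the
  control is locally constant.\<close>
definition admissible :: "real \<Rightarrow> real \<Rightarrow> (real \<Rightarrow> real) \<Rightarrow> bool" where
  "admissible umin umax u \<longleftrightarrow>
     (\<forall>t. u t \<in> Omega umin umax) \<and>
     (\<forall>a c. \<exists>S. finite S \<and>
        (\<forall>t \<in> {a<..<c} - S. \<exists>e>0. \<forall>s. \<bar>s - t\<bar> < e \<longrightarrow> u s = u t))"

definition fld :: "real \<Rightarrow> real \<Rightarrow> real \<Rightarrow> real \<times> real \<Rightarrow> real \<times> real" where
  "fld \<alpha> b u p = (u * \<alpha> * fst p, b * snd p + u * fst p)"

text \<open>gamma is a (Caratheodory) solution through p at time 0 under control u,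
  in integral form.\<close>
definition is_traj :: "real \<Rightarrow> real \<Rightarrow> (real \<Rightarrow> real) \<Rightarrow> real \<times> real \<Rightarrow> (real \<Rightarrow> real \<times> real) \<Rightarrow> bool" where
  "is_traj \<alpha> b u p \<gamma> \<longleftrightarrow>
     \<gamma> 0 = p \<and>
     (\<forall>t\<ge>0. ((\<lambda>s. fld \<alpha> b (u s) (\<gamma> s)) has_integral (\<gamma> t - p)) {0..t}) \<and>
     (\<forall>t\<le>0. ((\<lambda>s. fld \<alpha> b (u s) (\<gamma> s)) has_integral (p - \<gamma> t)) {t..0})"

definition phi :: "real \<Rightarrow> real \<Rightarrow> real \<Rightarrow> real \<times> real \<Rightarrow> (real \<Rightarrow> real) \<Rightarrow> real \<times> real" where
  "phi \<alpha> b t p u = (THE \<gamma>. is_traj \<alpha> b u p \<gamma>) t"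

definition slope :: "real \<Rightarrow> real \<Rightarrow> real \<Rightarrow> real" where
  "slope \<alpha> b u = u / (u * \<alpha> - b)"

definition ray :: "real \<Rightarrow> real \<Rightarrow> real \<Rightarrow> (real \<times> real) set" where
  "ray \<alpha> b u = {p \<in> G. snd p = slope \<alpha> b u * fst p}"

definition Bset :: "real \<Rightarrow> real \<Rightarrow> real \<Rightarrow> real \<Rightarrow> real set" where
  "Bset \<alpha> b umin umax = {u \<in> Omega umin umax. u * \<alpha> - b > 0}"

definition Cset :: "real \<Rightarrow> real \<Rightarrow> real \<Rightarrow> real \<Rightarrow> (real \<times> real) set" where
  "Cset \<alpha> b umin umax = (\<Union>u \<in> Bset \<alpha> b umin umax. ray \<alpha> b u)"

end

theory Submission
  imports Defs
begin

text \<open>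
  Both equations are linear, so for a bounded piecewise constant control the solution is explicit:
  x(t) = x0 exp(\<alpha> U(t)) with U(t) the integral of u over [0, t], and y follows from x by variation
  of constants. Running time backwards gives the system of the same shape with b, u(s) replaced by
  -b, -u(-s), so the two-sided solution exists, is unique, and phi is given by the explicit formula
  for t \<ge> 0.

  For m = m_v the quantity exp(-b t) (y - m x) changes along a solution at the rate
  exp(-b t) x b (v - u) / (v \<alpha> - b), whose sign is fixed as long as u \<le> v (or u \<ge> v).
  Since u \<mapsto> m_u increases on {u. u \<alpha> > b}, the set C consists of the points of G below the ray
  of u^* and above the ray of u_*, where a bounding ray is present only if its control lies in B;
  these half planes are therefore invariant under admissible controls. Under a constant control c
  the slope of every ray relaxes exponentially to m_c, namely as m_c + (m - m_c) exp((b - c \<alpha>) t);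
  choosing c in B beyond u_2 as seen from u_1 carries the ray of u_1 onto that of u_2.
\<close>

section \<open>Calculus away from finitely many points\<close>

lemma integrable_bounded_continuous_off_finite:
  fixes g :: "real \<Rightarrow> real"
  assumes "finite S" and "continuous_on ({a..b} - S) g" and "\<And>x. x \<in> {a..b} \<Longrightarrow> \<bar>g x\<bar> \<le> M"
  shows "g integrable_on {a..b}"
proof -
  have L: "{a..b} - S \<in> lmeasurable"
    using fmeasurable_Diff[OF _ negligible_imp_sets[OF negligible_finite[OF assms(1)]]]
    by (metis lmeasurable_cbox cbox_interval)
  have "g absolutely_integrable_on ({a..b} - S)"
  proof (rule measurable_bounded_by_integrable_imp_absolutely_integrable)
    show "g \<in> borel_measurable (lebesgue_on ({a..b} - S))"
      using continuous_imp_measurable_on_sets_lebesgue[OF assms(2)] L by blast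
    show "(\<lambda>_. M) integrable_on ({a..b} - S)"
      using L by (rule integrable_on_const)
  qed (use L assms(3) in auto)
  then have "g integrable_on ({a..b} - S)"
    using set_lebesgue_integral_eq_integral(1) by blast
  then show ?thesis
    by (rule integrable_spike_set) (auto intro: negligible_subset[OF negligible_finite[OF assms(1)]])
qed

lemma integral_has_vector_derivative_off_finite:
  fixes g :: "real \<Rightarrow> 'a::banach"
  assumes "g integrable_on {0..T}" "finite S" "t \<in> {0<..<T} - S" "continuous (at t within {0..T}) g"
  shows "((\<lambda>s. integral {0..s} g) has_vector_derivative g t) (at t)"
proof -
  have "((\<lambda>s. integral {0..s} g) has_vector_derivative g t) (at t within ({0..T} - S))"
    using integral_has_vector_derivative_continuous_at[OF assms(1) _ assms(2)] assms(3)
      continuous_within_subset[OF assms(4), of "{0..T} - S"] by auto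
  then have "((\<lambda>s. integral {0..s} g) has_vector_derivative g t) (at t within ({0<..<T} - S))"
    by (rule has_vector_derivative_within_subset) auto
  moreover have "open ({0<..<T} - S)"
    using assms(2) by (simp add: finite_imp_closed open_Diff)
  ultimately show ?thesis using at_within_open[OF assms(3)] by simp
qed

lemma has_vector_derivative_fst:
  "(\<gamma> has_vector_derivative v) F \<Longrightarrow> ((\<lambda>s. fst (\<gamma> s)) has_real_derivative fst v) F"
  unfolding has_real_derivative_iff_has_vector_derivative has_vector_derivative_def
  by (drule has_derivative_fst) simp

lemma has_vector_derivative_snd:
  "(\<gamma> has_vector_derivative v) F \<Longrightarrow> ((\<lambda>s. snd (\<gamma> s)) has_real_derivative snd v) F"
  unfolding has_real_derivative_iff_has_vector_derivative has_vector_derivative_def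
  by (drule has_derivative_snd) simp

lemma zero_derivative_off_finite_imp_eq:
  fixes w :: "real \<Rightarrow> real"
  assumes "finite S" "t \<ge> 0" "continuous_on {0..t} w"
    and "\<And>s. s \<in> {0<..<t} - S \<Longrightarrow> (w has_real_derivative 0) (at s)"
  shows "w t = w 0"
proof -
  have "((\<lambda>_. 0) has_integral w t - w 0) {0..t}"
    by (rule fundamental_theorem_of_calculus_interior_strong[OF assms(1,2) _ assms(3)])
      (use assms(4) in \<open>simp add: has_real_derivative_iff_has_vector_derivative\<close>)
  then show ?thesis
    using has_integral_unique[OF _ has_integral_0] by fastforce
qed

section \<open>Bounded piecewise constant controls\<close>

text \<open>Unlike admissibility, this class is closed under the time reversal u \<mapsto> -u(-\<cdot>).\<close>

definition bounded_piecewise_constant :: "(real \<Rightarrow> real) \<Rightarrow> bool" where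
  "bounded_piecewise_constant u \<longleftrightarrow> (\<exists>M. \<forall>t. \<bar>u t\<bar> \<le> M) \<and>
     (\<forall>a c. \<exists>S. finite S \<and> (\<forall>t \<in> {a<..<c} - S. \<exists>e>0. \<forall>s. \<bar>s - t\<bar> < e \<longrightarrow> u s = u t))"

lemma bounded_piecewise_constant_bound:
  assumes "bounded_piecewise_constant u"
  obtains M where "\<And>t. \<bar>u t\<bar> \<le> M"
  using assms unfolding bounded_piecewise_constant_def by blast

lemma bounded_piecewise_constant_isCont:
  assumes "bounded_piecewise_constant u"
  obtains S where "finite S" "\<And>t. t \<in> {a<..<c} - S \<Longrightarrow> isCont u t"
proof -
  obtain S where S: "finite S" "\<And>t. t \<in> {a<..<c} - S \<Longrightarrow> \<exists>e>0. \<forall>s. \<bar>s - t\<bar> < e \<longrightarrow> u s = u t"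
    using assms unfolding bounded_piecewise_constant_def by meson
  have "isCont u t" if t: "t \<in> {a<..<c} - S" for t
  proof -
    obtain e where "e > 0" "\<And>s. \<bar>s - t\<bar> < e \<Longrightarrow> u s = u t"
      using S(2)[OF t] by blast
    then have "eventually (\<lambda>s. u t = u s) (at t)"
      unfolding eventually_at by (metis dist_real_def)
    then show ?thesis
      unfolding isCont_def by (rule Lim_transform_eventually[OF tendsto_const])
  qed
  with S(1) show ?thesis using that by blast
qed

lemma bounded_piecewise_constant_reflect:
  assumes "bounded_piecewise_constant u"
  shows "bounded_piecewise_constant (\<lambda>s. - u (- s))"
  unfolding bounded_piecewise_constant_def
proof (intro conjI allI)
  obtain M where "\<And>t. \<bar>u t\<bar> \<le> M"
    using bounded_piecewise_constant_bound[OF assms] by blast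
  then show "\<exists>M. \<forall>t. \<bar>- u (- t)\<bar> \<le> M"
    by auto
  fix a c :: real
  obtain S where S: "finite S" "\<forall>t \<in> {-c<..<-a} - S. \<exists>e>0. \<forall>s. \<bar>s - t\<bar> < e \<longrightarrow> u s = u t"
    using assms unfolding bounded_piecewise_constant_def by meson
  have "\<exists>e>0. \<forall>s. \<bar>s - t\<bar> < e \<longrightarrow> - u (- s) = - u (- t)" if "t \<in> {a<..<c} - uminus ` S" for t
  proof -
    have "- t \<in> {-c<..<-a} - S" using that by (auto simp: image_iff)
    then obtain e where "e > 0" "\<And>s. \<bar>s - - t\<bar> < e \<Longrightarrow> u s = u (- t)"
      using S(2) by blast
    then show ?thesis by (metis abs_minus_commute minus_diff_eq minus_diff_minus)
  qed
  then show "\<exists>S. finite S \<and> (\<forall>t \<in> {a<..<c} - S. \<exists>e>0. \<forall>s. \<bar>s - t\<bar> < e \<longrightarrow> - u (- s) = - u (- t))"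
    using S(1) by blast
qed

lemma bounded_piecewise_constant_const: "bounded_piecewise_constant (\<lambda>_. c)"
  unfolding bounded_piecewise_constant_def using zero_less_one by blast

lemma admissible_imp_bounded_piecewise_constant:
  assumes "admissible umin umax u"
  shows "bounded_piecewise_constant u"
proof -
  have "\<bar>u t\<bar> \<le> \<bar>umin\<bar> + \<bar>umax\<bar>" for t
  proof -
    have "umin \<le> u t" "u t \<le> umax"
      using assms unfolding admissible_def Omega_def by auto
    then show ?thesis by linarith
  qed
  then show ?thesis using assms unfolding admissible_def bounded_piecewise_constant_def by blast
qed

lemma integrable_bounded_piecewise_constant_mult:
  assumes "bounded_piecewise_constant u" "continuous_on {a..b} g"
  shows "(\<lambda>s. u s * g s) integrable_on {a..b}"
proof -
  obtain M where M: "\<And>t. \<bar>u t\<bar> \<le> M"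
    using bounded_piecewise_constant_bound[OF assms(1)] by blast
  obtain B where "\<forall>x \<in> g ` {a..b}. norm x \<le> B"
    using compact_imp_bounded[OF compact_continuous_image[OF assms(2) compact_Icc]]
    unfolding bounded_iff by blast
  then have B: "\<And>s. s \<in> {a..b} \<Longrightarrow> \<bar>g s\<bar> \<le> B"
    by auto
  obtain S where S: "finite S" "\<And>t. t \<in> {a - 1<..<b + 1} - S \<Longrightarrow> isCont u t"
    using bounded_piecewise_constant_isCont[OF assms(1)] by blast
  have "continuous_on ({a..b} - S) u"
    using S(2) by (intro continuous_at_imp_continuous_on) auto
  then have "continuous_on ({a..b} - S) (\<lambda>s. u s * g s)"
    using continuous_on_subset[OF assms(2)] by (intro continuous_on_mult) auto
  moreover have "\<bar>u s * g s\<bar> \<le> M * B" if "s \<in> {a..b}" for s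
    unfolding abs_mult using M B[OF that] by (intro mult_mono) (auto intro: order.trans[OF abs_ge_zero M])
  ultimately show ?thesis
    using integrable_bounded_continuous_off_finite[OF S(1)] by blast
qed

section \<open>Trajectories\<close>

definition forward_traj :: "real \<Rightarrow> real \<Rightarrow> (real \<Rightarrow> real) \<Rightarrow> real \<times> real \<Rightarrow> (real \<Rightarrow> real \<times> real) \<Rightarrow> bool" where
  "forward_traj \<alpha> b u p \<gamma> \<longleftrightarrow>
     \<gamma> 0 = p \<and> (\<forall>t\<ge>0. ((\<lambda>s. fld \<alpha> b (u s) (\<gamma> s)) has_integral (\<gamma> t - p)) {0..t})"

lemma forward_traj_0: "forward_traj \<alpha> b u p \<gamma> \<Longrightarrow> \<gamma> 0 = p"
  unfolding forward_traj_def by blast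

lemma forward_trajI:
  assumes "\<gamma> 0 = p"
    and "\<And>T. \<exists>S. finite S \<and> continuous_on {0..T} \<gamma> \<and>
           (\<forall>s\<in>{0<..<T} - S. (\<gamma> has_vector_derivative fld \<alpha> b (u s) (\<gamma> s)) (at s))"
  shows "forward_traj \<alpha> b u p \<gamma>"
  unfolding forward_traj_def
proof (intro conjI allI impI assms(1))
  fix t :: real
  assume "t \<ge> 0"
  obtain S where S: "finite S" "continuous_on {0..t} \<gamma>"
    "\<forall>s\<in>{0<..<t} - S. (\<gamma> has_vector_derivative fld \<alpha> b (u s) (\<gamma> s)) (at s)"
    using assms(2)[of t] by auto
  have "((\<lambda>s. fld \<alpha> b (u s) (\<gamma> s)) has_integral \<gamma> t - \<gamma> 0) {0..t}"
    by (rule fundamental_theorem_of_calculus_interior_strong[OF S(1) \<open>t \<ge> 0\<close> _ S(2)])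
      (use S(3) in blast)
  then show "((\<lambda>s. fld \<alpha> b (u s) (\<gamma> s)) has_integral \<gamma> t - p) {0..t}"
    using assms(1) by simp
qed

lemma forward_traj_cong:
  assumes "\<And>t. t \<ge> 0 \<Longrightarrow> \<gamma> t = \<gamma>' t"
  shows "forward_traj \<alpha> b u p \<gamma> \<longleftrightarrow> forward_traj \<alpha> b u p \<gamma>'"
proof -
  have "((\<lambda>s. fld \<alpha> b (u s) (\<gamma> s)) has_integral (\<gamma> t - p)) {0..t} \<longleftrightarrow>
        ((\<lambda>s. fld \<alpha> b (u s) (\<gamma>' s)) has_integral (\<gamma>' t - p)) {0..t}" if "t \<ge> 0" for t
    using that by (simp add: assms) (rule has_integral_cong, simp add: assms)
  then show ?thesis
    unfolding forward_traj_def using assms[of 0] by auto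
qed

lemma forward_traj_has_vector_derivative:
  assumes "forward_traj \<alpha> b u p \<gamma>" "bounded_piecewise_constant u" "T \<ge> 0"
  obtains S where "finite S" "continuous_on {0..T} \<gamma>"
    "\<And>t. t \<in> {0<..<T} - S \<Longrightarrow> (\<gamma> has_vector_derivative fld \<alpha> b (u t) (\<gamma> t)) (at t)"
proof -
  define f where "f = (\<lambda>s. fld \<alpha> b (u s) (\<gamma> s))"
  have hi: "\<And>t. t \<ge> 0 \<Longrightarrow> (f has_integral \<gamma> t - p) {0..t}"
    using assms(1) unfolding forward_traj_def f_def by blast
  have fi: "f integrable_on {0..T}"
    using hi[of T] assms(3) by (auto simp: integrable_on_def)
  have eq: "\<gamma> s = p + integral {0..s} f" if "s \<in> {0..T}" for s
    using hi[of s] that by (simp add: integral_unique)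
  have "continuous_on {0..T} (\<lambda>s. p + integral {0..s} f)"
    by (intro continuous_intros indefinite_integral_continuous_1[OF fi])
  then have cg: "continuous_on {0..T} \<gamma>"
    by (rule continuous_on_eq) (use eq in auto)
  obtain S where S: "finite S" "\<And>t. t \<in> {0<..<T} - S \<Longrightarrow> isCont u t"
    using bounded_piecewise_constant_isCont[OF assms(2)] by blast
  have "(\<gamma> has_vector_derivative f t) (at t)" if t: "t \<in> {0<..<T} - S" for t
  proof -
    have "continuous (at t within {0..T}) u"
      using S(2)[OF t] continuous_at_imp_continuous_at_within by blast
    moreover have "continuous (at t within {0..T}) \<gamma>"
      using cg t unfolding continuous_on_eq_continuous_within by auto
    ultimately have "continuous (at t within {0..T}) f"
      unfolding f_def fld_def by (intro continuous_intros)
    then have "((\<lambda>s. p + integral {0..s} f) has_vector_derivative f t) (at t)"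
      using has_vector_derivative_add[OF has_vector_derivative_const
          integral_has_vector_derivative_off_finite[OF fi S(1) t]] by simp
    then show ?thesis
      using has_vector_derivative_transform_within_open[of _ _ t "{0<..<T}" \<gamma>] t eq by auto
  qed
  with S(1) cg show ?thesis using that unfolding f_def by blast
qed

lemma fld_reflect: "fld \<alpha> (- b) (- v) p = - fld \<alpha> b v p"
  by (simp add: fld_def)

lemma is_traj_iff_forward:
  "is_traj \<alpha> b u p \<gamma> \<longleftrightarrow>
     forward_traj \<alpha> b u p \<gamma> \<and> forward_traj \<alpha> (- b) (\<lambda>s. - u (- s)) p (\<lambda>s. \<gamma> (- s))"
proof -
  let ?f = "\<lambda>s. fld \<alpha> b (u s) (\<gamma> s)"
  have "((\<lambda>s. fld \<alpha> (- b) (- u (- s)) (\<gamma> (- s))) has_integral \<gamma> (- t) - p) {0..t} \<longleftrightarrow>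
        (?f has_integral p - \<gamma> (- t)) {- t..0}" for t
    using has_integral_reflect_real[of ?f "p - \<gamma> (- t)" 0 "- t"]
      has_integral_neg_iff[of "\<lambda>s. ?f (- s)" "\<gamma> (- t) - p" "{0..t}"]
    by (simp add: fld_reflect)
  moreover have "(\<forall>t\<le>0. P t) \<longleftrightarrow> (\<forall>t\<ge>0. P (- t))" for P :: "real \<Rightarrow> bool"
    by (metis minus_minus neg_0_le_iff_le)
  ultimately show ?thesis
    unfolding is_traj_def forward_traj_def by auto
qed

section \<open>The explicit solution\<close>

definition control_integral :: "(real \<Rightarrow> real) \<Rightarrow> real \<Rightarrow> real" where
  "control_integral u t = integral {0..t} u"

definition sol_x :: "real \<Rightarrow> (real \<Rightarrow> real) \<Rightarrow> real \<Rightarrow> real \<Rightarrow> real" where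
  "sol_x \<alpha> u x0 t = x0 * exp (\<alpha> * control_integral u t)"

definition sol_v :: "real \<Rightarrow> real \<Rightarrow> (real \<Rightarrow> real) \<Rightarrow> real \<Rightarrow> real \<Rightarrow> real" where
  "sol_v \<alpha> b u x0 t = integral {0..t} (\<lambda>s. u s * (exp (- b * s) * sol_x \<alpha> u x0 s))"

definition sol_y :: "real \<Rightarrow> real \<Rightarrow> (real \<Rightarrow> real) \<Rightarrow> real \<Rightarrow> real \<Rightarrow> real \<Rightarrow> real" where
  "sol_y \<alpha> b u x0 y0 t = exp (b * t) * (y0 + sol_v \<alpha> b u x0 t)"

definition sol :: "real \<Rightarrow> real \<Rightarrow> (real \<Rightarrow> real) \<Rightarrow> real \<times> real \<Rightarrow> real \<Rightarrow> real \<times> real" where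
  "sol \<alpha> b u p t = (sol_x \<alpha> u (fst p) t, sol_y \<alpha> b u (fst p) (snd p) t)"

lemma sol_0 [simp]: "sol \<alpha> b u p 0 = p"
  by (simp add: sol_def sol_x_def sol_y_def sol_v_def control_integral_def)

lemma sol_x_pos: "x0 > 0 \<Longrightarrow> sol_x \<alpha> u x0 t > 0"
  by (simp add: sol_x_def)

lemma sol_components_has_derivative:
  assumes "bounded_piecewise_constant u"
  obtains S where "finite S"
    "continuous_on {0..T} (control_integral u)" "continuous_on {0..T} (sol_v \<alpha> b u x0)"
    "\<And>t. t \<in> {0<..<T} - S \<Longrightarrow> (control_integral u has_real_derivative u t) (at t)"
    "\<And>t. t \<in> {0<..<T} - S \<Longrightarrow>
       (sol_v \<alpha> b u x0 has_real_derivative u t * (exp (- b * t) * sol_x \<alpha> u x0 t)) (at t)"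
proof -
  obtain S where S: "finite S" "\<And>t. t \<in> {0<..<T} - S \<Longrightarrow> isCont u t"
    using bounded_piecewise_constant_isCont[OF assms(1)] by blast
  define h where "h = (\<lambda>s. u s * (exp (- b * s) * sol_x \<alpha> u x0 s))"
  have iu: "u integrable_on {0..T}"
    using integrable_bounded_piecewise_constant_mult[OF assms(1) continuous_on_const[of _ 1]] by simp
  then have cU: "continuous_on {0..T} (control_integral u)"
    unfolding control_integral_def by (rule indefinite_integral_continuous_1)
  have cX: "continuous_on {0..T} (sol_x \<alpha> u x0)"
    unfolding sol_x_def by (intro continuous_intros cU)
  have ih: "h integrable_on {0..T}"
    unfolding h_def by (intro integrable_bounded_piecewise_constant_mult assms(1) continuous_intros cX)
  then have cV: "continuous_on {0..T} (sol_v \<alpha> b u x0)"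
    unfolding sol_v_def h_def[symmetric] by (rule indefinite_integral_continuous_1)
  have cu: "continuous (at t within {0..T}) u" if "t \<in> {0<..<T} - S" for t
    using S(2)[OF that] continuous_at_imp_continuous_at_within by blast
  have dU: "(control_integral u has_real_derivative u t) (at t)" if t: "t \<in> {0<..<T} - S" for t
    unfolding control_integral_def has_real_derivative_iff_has_vector_derivative
    using integral_has_vector_derivative_off_finite[OF iu S(1) t cu[OF t]] .
  have dV: "(sol_v \<alpha> b u x0 has_real_derivative h t) (at t)" if t: "t \<in> {0<..<T} - S" for t
  proof -
    have "continuous (at t within {0..T}) h"
      unfolding h_def using cX t
      by (intro continuous_intros cu[OF t]) (auto simp: continuous_on_eq_continuous_within)
    then show ?thesis
      unfolding sol_v_def h_def[symmetric] has_real_derivative_iff_has_vector_derivative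
      using integral_has_vector_derivative_off_finite[OF ih S(1) t] by blast
  qed
  show ?thesis
    using that[OF S(1) cU cV dU] dV unfolding h_def by blast
qed

lemma sol_has_vector_derivative:
  assumes "bounded_piecewise_constant u"
  obtains S where "finite S" "continuous_on {0..T} (sol \<alpha> b u p)"
    "\<And>t. t \<in> {0<..<T} - S \<Longrightarrow> (sol \<alpha> b u p has_vector_derivative fld \<alpha> b (u t) (sol \<alpha> b u p t)) (at t)"
proof -
  obtain S where S: "finite S"
    "continuous_on {0..T} (control_integral u)" "continuous_on {0..T} (sol_v \<alpha> b u (fst p))"
    "\<And>t. t \<in> {0<..<T} - S \<Longrightarrow> (control_integral u has_real_derivative u t) (at t)"
    "\<And>t. t \<in> {0<..<T} - S \<Longrightarrow>
       (sol_v \<alpha> b u (fst p) has_real_derivative u t * (exp (- b * t) * sol_x \<alpha> u (fst p) t)) (at t)"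
    using sol_components_has_derivative[OF assms] by blast
  have "continuous_on {0..T} (sol \<alpha> b u p)"
    unfolding sol_def sol_x_def sol_y_def by (intro continuous_intros S(2,3))
  moreover have "(sol \<alpha> b u p has_vector_derivative fld \<alpha> b (u t) (sol \<alpha> b u p t)) (at t)"
    if t: "t \<in> {0<..<T} - S" for t
  proof -
    have "(sol_x \<alpha> u (fst p) has_real_derivative u t * \<alpha> * sol_x \<alpha> u (fst p) t) (at t)"
      unfolding sol_x_def by (rule derivative_eq_intros S(4)[OF t] refl | simp)+
    moreover have "(sol_y \<alpha> b u (fst p) (snd p) has_real_derivative
        b * sol_y \<alpha> b u (fst p) (snd p) t + u t * sol_x \<alpha> u (fst p) t) (at t)"
    proof -
      have "(sol_y \<alpha> b u (fst p) (snd p) has_real_derivative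
          exp (b * t) * b * (snd p + sol_v \<alpha> b u (fst p) t)
          + exp (b * t) * (u t * (exp (- b * t) * sol_x \<alpha> u (fst p) t))) (at t)"
        unfolding sol_y_def by (rule derivative_eq_intros S(5)[OF t] refl | simp)+
      then show ?thesis
        unfolding sol_y_def by (simp add: exp_minus field_simps)
    qed
    ultimately show ?thesis
      unfolding sol_def fld_def has_real_derivative_iff_has_vector_derivative
      by (auto intro: has_vector_derivative_Pair)
  qed
  ultimately show ?thesis using that S(1) by blast
qed

lemma forward_traj_sol:
  assumes "bounded_piecewise_constant u"
  shows "forward_traj \<alpha> b u p (sol \<alpha> b u p)"
proof (rule forward_trajI)
  fix T :: real
  show "\<exists>S. finite S \<and> continuous_on {0..T} (sol \<alpha> b u p) \<and>
      (\<forall>s\<in>{0<..<T} - S. (sol \<alpha> b u p has_vector_derivative fld \<alpha> b (u s) (sol \<alpha> b u p s)) (at s))"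
  proof -
    obtain S where "finite S" "continuous_on {0..T} (sol \<alpha> b u p)"
      "\<And>t. t \<in> {0<..<T} - S \<Longrightarrow> (sol \<alpha> b u p has_vector_derivative fld \<alpha> b (u t) (sol \<alpha> b u p t)) (at t)"
      using sol_has_vector_derivative[OF assms] by blast
    then show ?thesis by blast
  qed
qed simp

lemma forward_traj_fst:
  assumes "forward_traj \<alpha> b u p \<gamma>" "bounded_piecewise_constant u" "t \<ge> 0"
  shows "fst (\<gamma> t) = sol_x \<alpha> u (fst p) t"
proof -
  obtain S1 where S1: "finite S1" "continuous_on {0..t} \<gamma>"
    "\<And>s. s \<in> {0<..<t} - S1 \<Longrightarrow> (\<gamma> has_vector_derivative fld \<alpha> b (u s) (\<gamma> s)) (at s)"
    by (rule forward_traj_has_vector_derivative[OF assms]) blast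
  obtain S2 where S2: "finite S2" "continuous_on {0..t} (control_integral u)"
    "\<And>s. s \<in> {0<..<t} - S2 \<Longrightarrow> (control_integral u has_real_derivative u s) (at s)"
    by (rule sol_components_has_derivative[OF assms(2)]) blast
  define w where "w = (\<lambda>s. fst (\<gamma> s) * exp (- \<alpha> * control_integral u s))"
  have "w t = w 0"
  proof (rule zero_derivative_off_finite_imp_eq[of "S1 \<union> S2"])
    show "continuous_on {0..t} w"
      unfolding w_def by (intro continuous_intros S1(2) S2(2))
    fix s
    assume s: "s \<in> {0<..<t} - (S1 \<union> S2)"
    have d1: "((\<lambda>s. fst (\<gamma> s)) has_real_derivative u s * \<alpha> * fst (\<gamma> s)) (at s)"
      using has_vector_derivative_fst[OF S1(3)[of s]] s by (simp add: fld_def)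
    have d2: "(control_integral u has_real_derivative u s) (at s)"
      using S2(3)[of s] s by blast
    show "(w has_real_derivative 0) (at s)"
      unfolding w_def by (rule derivative_eq_intros d1 d2 refl | simp add: algebra_simps)+
  qed (use S1(1) S2(1) assms(3) in auto)
  then have "fst (\<gamma> t) * exp (- (\<alpha> * control_integral u t)) = fst p"
    using forward_traj_0[OF assms(1)] by (simp add: w_def control_integral_def)
  then show ?thesis
    by (simp add: sol_x_def exp_minus field_simps)
qed

lemma forward_traj_snd:
  assumes "forward_traj \<alpha> b u p \<gamma>" "bounded_piecewise_constant u" "t \<ge> 0"
  shows "snd (\<gamma> t) = sol_y \<alpha> b u (fst p) (snd p) t"
proof -
  obtain S1 where S1: "finite S1" "continuous_on {0..t} \<gamma>"
    "\<And>s. s \<in> {0<..<t} - S1 \<Longrightarrow> (\<gamma> has_vector_derivative fld \<alpha> b (u s) (\<gamma> s)) (at s)"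
    by (rule forward_traj_has_vector_derivative[OF assms]) blast
  obtain S2 where S2: "finite S2" "continuous_on {0..t} (sol_v \<alpha> b u (fst p))"
    "\<And>s. s \<in> {0<..<t} - S2 \<Longrightarrow>
       (sol_v \<alpha> b u (fst p) has_real_derivative u s * (exp (- b * s) * sol_x \<alpha> u (fst p) s)) (at s)"
    by (rule sol_components_has_derivative[OF assms(2)]) blast
  define w where "w = (\<lambda>s. snd (\<gamma> s) * exp (- b * s) - sol_v \<alpha> b u (fst p) s)"
  have "w t = w 0"
  proof (rule zero_derivative_off_finite_imp_eq[of "S1 \<union> S2"])
    show "continuous_on {0..t} w"
      unfolding w_def by (intro continuous_intros S1(2) S2(2))
    fix s
    assume s: "s \<in> {0<..<t} - (S1 \<union> S2)"
    have "fst (\<gamma> s) = sol_x \<alpha> u (fst p) s"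
      using forward_traj_fst[OF assms(1,2)] s by simp
    then have d1: "((\<lambda>s. snd (\<gamma> s)) has_real_derivative b * snd (\<gamma> s) + u s * sol_x \<alpha> u (fst p) s) (at s)"
      using has_vector_derivative_snd[OF S1(3)[of s]] s by (simp add: fld_def)
    have d2: "(sol_v \<alpha> b u (fst p) has_real_derivative u s * (exp (- b * s) * sol_x \<alpha> u (fst p) s)) (at s)"
      using S2(3)[of s] s by blast
    show "(w has_real_derivative 0) (at s)"
      unfolding w_def by (rule derivative_eq_intros d1 d2 refl | simp add: algebra_simps)+
  qed (use S1(1) S2(1) assms(3) in auto)
  then have "snd (\<gamma> t) * exp (- (b * t)) - sol_v \<alpha> b u (fst p) t = snd p"
    using forward_traj_0[OF assms(1)] by (simp add: w_def sol_v_def)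
  then show ?thesis
    by (simp add: sol_y_def exp_minus field_simps)
qed

lemma forward_traj_eq_sol:
  assumes "forward_traj \<alpha> b u p \<gamma>" "bounded_piecewise_constant u" "t \<ge> 0"
  shows "\<gamma> t = sol \<alpha> b u p t"
  using forward_traj_fst[OF assms] forward_traj_snd[OF assms] by (simp add: sol_def prod_eq_iff)

lemma is_traj_exists:
  assumes "bounded_piecewise_constant u"
  shows "\<exists>\<gamma>. is_traj \<alpha> b u p \<gamma>"
proof
  define ur where "ur = (\<lambda>s. - u (- s))"
  define \<gamma> where "\<gamma> = (\<lambda>t. if t \<ge> 0 then sol \<alpha> b u p t else sol \<alpha> (- b) ur p (- t))"
  have "forward_traj \<alpha> b u p \<gamma>"
    using forward_traj_sol[OF assms] by (subst forward_traj_cong[of _ "sol \<alpha> b u p"]) (auto simp: \<gamma>_def)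
  moreover have "forward_traj \<alpha> (- b) ur p (\<lambda>s. \<gamma> (- s))"
    using forward_traj_sol[OF bounded_piecewise_constant_reflect[OF assms]]
    by (subst forward_traj_cong[of _ "sol \<alpha> (- b) ur p"]) (auto simp: \<gamma>_def ur_def)
  ultimately show "is_traj \<alpha> b u p \<gamma>"
    unfolding is_traj_iff_forward ur_def by blast
qed

lemma is_traj_unique:
  assumes "bounded_piecewise_constant u" "is_traj \<alpha> b u p \<gamma>" "is_traj \<alpha> b u p \<gamma>'"
  shows "\<gamma> = \<gamma>'"
proof
  fix t :: real
  have ur: "bounded_piecewise_constant (\<lambda>s. - u (- s))"
    by (rule bounded_piecewise_constant_reflect[OF assms(1)])
  show "\<gamma> t = \<gamma>' t"
  proof (cases "t \<ge> 0")
    case True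
    then show ?thesis
      using assms(2,3) forward_traj_eq_sol[OF _ assms(1) True] unfolding is_traj_iff_forward by metis
  next
    case False
    then have "- t \<ge> 0" by simp
    then show ?thesis
      using assms(2,3) forward_traj_eq_sol[OF _ ur] unfolding is_traj_iff_forward by (metis minus_minus)
  qed
qed

lemma phi_eq_sol:
  assumes "bounded_piecewise_constant u" "t \<ge> 0"
  shows "phi \<alpha> b t p u = sol \<alpha> b u p t"
proof -
  obtain \<gamma> where \<gamma>: "is_traj \<alpha> b u p \<gamma>"
    using is_traj_exists[OF assms(1)] by blast
  then have "(THE \<gamma>. is_traj \<alpha> b u p \<gamma>) = \<gamma>"
    using is_traj_unique[OF assms(1)] by blast
  then show ?thesis
    using \<gamma> forward_traj_eq_sol[OF _ assms] unfolding phi_def is_traj_iff_forward by simp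
qed

section \<open>Constant controls\<close>

definition const_flow :: "real \<Rightarrow> real \<Rightarrow> real \<Rightarrow> real \<times> real \<Rightarrow> real \<Rightarrow> real \<times> real" where
  "const_flow \<alpha> b c p t = (fst p * exp (c * \<alpha> * t),
     slope \<alpha> b c * fst p * exp (c * \<alpha> * t) + (snd p - slope \<alpha> b c * fst p) * exp (b * t))"

lemma forward_traj_const_flow:
  assumes "c * \<alpha> - b \<noteq> 0"
  shows "forward_traj \<alpha> b (\<lambda>_. c) p (const_flow \<alpha> b c p)"
proof (rule forward_trajI)
  fix T :: real
  define m where "m = slope \<alpha> b c"
  have m: "m * (c * \<alpha>) = b * m + c"
    using assms by (simp add: m_def slope_def field_simps)
  have "(const_flow \<alpha> b c p has_vector_derivative fld \<alpha> b c (const_flow \<alpha> b c p s)) (at s)" for s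
  proof -
    have "((\<lambda>t. fst p * exp (c * \<alpha> * t)) has_real_derivative c * \<alpha> * (fst p * exp (c * \<alpha> * s))) (at s)"
      by (rule derivative_eq_intros refl | simp)+
    moreover have "((\<lambda>t. m * fst p * exp (c * \<alpha> * t) + (snd p - m * fst p) * exp (b * t)) has_real_derivative
        m * fst p * (exp (c * \<alpha> * s) * (c * \<alpha>)) + (snd p - m * fst p) * (exp (b * s) * b)) (at s)"
      by (rule derivative_eq_intros refl | simp)+
    moreover have "m * fst p * (exp (c * \<alpha> * s) * (c * \<alpha>)) + (snd p - m * fst p) * (exp (b * s) * b)
        = b * (m * fst p * exp (c * \<alpha> * s) + (snd p - m * fst p) * exp (b * s)) + c * (fst p * exp (c * \<alpha> * s))"
    proof -
      have "m * fst p * (exp (c * \<alpha> * s) * (c * \<alpha>)) = (m * (c * \<alpha>)) * fst p * exp (c * \<alpha> * s)"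
        by simp
      then show ?thesis
        unfolding m by (simp add: algebra_simps)
    qed
    ultimately show ?thesis
      unfolding const_flow_def fld_def m_def[symmetric] has_real_derivative_iff_has_vector_derivative
      by (auto intro: has_vector_derivative_Pair simp: mult.assoc)
  qed
  moreover have "continuous_on {0..T} (const_flow \<alpha> b c p)"
    unfolding const_flow_def by (intro continuous_intros)
  ultimately show "\<exists>S. finite S \<and> continuous_on {0..T} (const_flow \<alpha> b c p) \<and>
      (\<forall>s\<in>{0<..<T} - S. (const_flow \<alpha> b c p has_vector_derivative fld \<alpha> b c (const_flow \<alpha> b c p s)) (at s))"
    by blast
qed (simp add: const_flow_def)

lemma phi_const:
  assumes "c * \<alpha> - b \<noteq> 0" "t \<ge> 0"
  shows "phi \<alpha> b t p (\<lambda>_. c) = const_flow \<alpha> b c p t"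
  using phi_eq_sol[OF bounded_piecewise_constant_const assms(2)]
    forward_traj_eq_sol[OF forward_traj_const_flow[OF assms(1)] bounded_piecewise_constant_const assms(2)]
  by simp

lemma const_flow_image_line:
  "(\<lambda>p. const_flow \<alpha> b c p t) ` {p \<in> G. snd p = m * fst p} =
     {p \<in> G. snd p = (slope \<alpha> b c + (m - slope \<alpha> b c) * exp ((b - c * \<alpha>) * t)) * fst p}"
  (is "?f ` _ = {p \<in> G. snd p = ?n * fst p}")
proof -
  define E where "E = exp (c * \<alpha> * t)"
  have E: "E > 0" "exp (b * t) = exp ((b - c * \<alpha>) * t) * E"
    unfolding E_def by (simp_all add: exp_add[symmetric] algebra_simps)
  have f: "?f p = (fst p * E, ?n * (fst p * E))" if "snd p = m * fst p" for p
    unfolding const_flow_def E_def[symmetric] using that by (simp add: E(2) algebra_simps)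
  show ?thesis
  proof (intro equalityI subsetI)
    fix q
    assume "q \<in> ?f ` {p \<in> G. snd p = m * fst p}"
    then show "q \<in> {p \<in> G. snd p = ?n * fst p}"
      using f E(1) by (auto simp: G_def)
  next
    fix q
    assume q: "q \<in> {p \<in> G. snd p = ?n * fst p}"
    define p where "p = (fst q / E, m * (fst q / E))"
    have "q = ?f p"
      using f[of p] q E(1) by (simp add: p_def prod_eq_iff)
    moreover have "p \<in> {p \<in> G. snd p = m * fst p}"
      using q E(1) by (simp add: p_def G_def)
    ultimately show "q \<in> ?f ` {p \<in> G. snd p = m * fst p}"
      by blast
  qed
qed

section \<open>Slopes and the cone\<close>

lemma slope_le_iff:
  assumes "b < 0" "u * \<alpha> - b > 0" "v * \<alpha> - b > 0"
  shows "slope \<alpha> b u \<le> slope \<alpha> b v \<longleftrightarrow> u \<le> v"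
proof -
  have "slope \<alpha> b u \<le> slope \<alpha> b v \<longleftrightarrow> u * (v * \<alpha> - b) \<le> v * (u * \<alpha> - b)"
    using assms unfolding slope_def by (simp add: divide_simps)
  also have "\<dots> \<longleftrightarrow> v * b \<le> u * b"
    by (simp add: algebra_simps)
  also have "\<dots> \<longleftrightarrow> u \<le> v"
    using assms(1) by (simp add: mult_le_cancel_right)
  finally show ?thesis .
qed

lemma slope_less_iff:
  assumes "b < 0" "u * \<alpha> - b > 0" "v * \<alpha> - b > 0"
  shows "slope \<alpha> b u < slope \<alpha> b v \<longleftrightarrow> u < v"
  using slope_le_iff[OF assms(1,3,2)] by (simp add: not_le[symmetric])

lemma slope_mult_less_one:
  assumes "b < 0" "u * \<alpha> - b > 0"
  shows "slope \<alpha> b u * \<alpha> < 1"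
proof -
  have "slope \<alpha> b u * \<alpha> - 1 = b / (u * \<alpha> - b)"
    using assms unfolding slope_def by (simp add: field_simps)
  moreover have "b / (u * \<alpha> - b) < 0"
    using assms by (simp add: divide_neg_pos)
  ultimately show ?thesis
    by linarith
qed

definition control_of_slope :: "real \<Rightarrow> real \<Rightarrow> real \<Rightarrow> real" where
  "control_of_slope \<alpha> b m = m * b / (m * \<alpha> - 1)"

lemma control_of_slope_inverse:
  assumes "b < 0" "m * \<alpha> < 1"
  shows "control_of_slope \<alpha> b m * \<alpha> - b > 0" "slope \<alpha> b (control_of_slope \<alpha> b m) = m"
proof -
  have e: "control_of_slope \<alpha> b m * \<alpha> - b = b / (m * \<alpha> - 1)"
    using assms(2) unfolding control_of_slope_def by (simp add: field_simps)
  show "control_of_slope \<alpha> b m * \<alpha> - b > 0"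
    unfolding e using assms by (simp add: divide_neg_neg)
  show "slope \<alpha> b (control_of_slope \<alpha> b m) = m"
    unfolding slope_def e using assms unfolding control_of_slope_def by (simp add: field_simps)
qed

lemma slope_deviation_factor:
  assumes "v * \<alpha> - b \<noteq> 0"
  shows "w - slope \<alpha> b v * w * \<alpha> + slope \<alpha> b v * b = b * (v - w) / (v * \<alpha> - b)"
  using assms unfolding slope_def by (simp add: eq_divide_eq algebra_simps) (simp add: field_simps)

lemma slope_mult_less_one_between:
  assumes "umin \<le> 0" "0 \<le> umax" "b < 0"
    and lo: "umin * \<alpha> - b > 0 \<Longrightarrow> slope \<alpha> b umin \<le> m"
    and hi: "umax * \<alpha> - b > 0 \<Longrightarrow> m \<le> slope \<alpha> b umax"
  shows "m * \<alpha> < 1"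
proof (cases "\<alpha> \<ge> 0")
  case True
  then have "umax * \<alpha> - b > 0"
    using assms(2,3) mult_nonneg_nonneg[of umax \<alpha>] by linarith
  then have "m * \<alpha> \<le> slope \<alpha> b umax * \<alpha>" "slope \<alpha> b umax * \<alpha> < 1"
    using hi True slope_mult_less_one[OF assms(3)] by (auto intro: mult_right_mono)
  then show ?thesis by linarith
next
  case False
  then have "umin * \<alpha> - b > 0"
    using assms(1,3) mult_nonpos_nonpos[of umin \<alpha>] by linarith
  then have "m * \<alpha> \<le> slope \<alpha> b umin * \<alpha>" "slope \<alpha> b umin * \<alpha> < 1"
    using lo False slope_mult_less_one[OF assms(3)] by (auto intro: mult_right_mono_neg)
  then show ?thesis by linarith
qed

lemma control_of_slope_between:
  assumes "umin \<le> 0" "0 \<le> umax" "b < 0"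
    and lo: "umin * \<alpha> - b > 0 \<Longrightarrow> slope \<alpha> b umin \<le> m"
    and hi: "umax * \<alpha> - b > 0 \<Longrightarrow> m \<le> slope \<alpha> b umax"
  shows "umin \<le> control_of_slope \<alpha> b m" "control_of_slope \<alpha> b m \<le> umax"
proof -
  define w where "w = control_of_slope \<alpha> b m"
  note w = control_of_slope_inverse[OF assms(3) slope_mult_less_one_between[OF assms], folded w_def]
  show "umin \<le> w"
  proof (cases "umin * \<alpha> - b > 0")
    case True
    then show ?thesis using lo slope_le_iff[OF assms(3) True w(1)] w(2) by simp
  next
    case False
    then have "\<not> \<alpha> \<le> 0"
      using assms(1,3) mult_nonpos_nonpos[of umin \<alpha>] by linarith
    moreover have "umin * \<alpha> < w * \<alpha>"
      using False w(1) by linarith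
    ultimately show ?thesis by simp
  qed
  show "w \<le> umax"
  proof (cases "umax * \<alpha> - b > 0")
    case True
    then show ?thesis using hi slope_le_iff[OF assms(3) w(1) True] w(2) by simp
  next
    case False
    then have "\<not> \<alpha> \<ge> 0"
      using assms(2,3) mult_nonneg_nonneg[of umax \<alpha>] by linarith
    moreover have "umax * \<alpha> < w * \<alpha>"
      using False w(1) by linarith
    ultimately show ?thesis by simp
  qed
qed

lemma Cset_eq_cone:
  assumes "umin \<le> 0" "0 \<le> umax" "b < 0"
  shows "Cset \<alpha> b umin umax =
    {p \<in> G. (umin * \<alpha> - b > 0 \<longrightarrow> slope \<alpha> b umin * fst p \<le> snd p) \<and>
            (umax * \<alpha> - b > 0 \<longrightarrow> snd p \<le> slope \<alpha> b umax * fst p)}"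
    (is "_ = ?K")
proof (intro equalityI subsetI)
  fix p
  assume "p \<in> Cset \<alpha> b umin umax"
  then obtain u where u: "umin \<le> u" "u \<le> umax" "u * \<alpha> - b > 0" "p \<in> G" "snd p = slope \<alpha> b u * fst p"
    unfolding Cset_def Bset_def Omega_def ray_def by auto
  then have "fst p > 0"
    by (simp add: G_def)
  then show "p \<in> ?K"
    using u slope_le_iff[OF assms(3), of umin \<alpha> u] slope_le_iff[OF assms(3), of u \<alpha> umax]
    by (auto intro: mult_right_mono)
next
  fix p
  assume p: "p \<in> ?K"
  define m where "m = snd p / fst p"
  have x: "fst p > 0" "snd p = m * fst p"
    using p by (auto simp: G_def m_def)
  have lo: "umin * \<alpha> - b > 0 \<Longrightarrow> slope \<alpha> b umin \<le> m"
    and hi: "umax * \<alpha> - b > 0 \<Longrightarrow> m \<le> slope \<alpha> b umax"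
    using p x by auto
  show "p \<in> Cset \<alpha> b umin umax"
    using p x control_of_slope_between[OF assms lo hi]
      control_of_slope_inverse[OF assms(3) slope_mult_less_one_between[OF assms lo hi]]
    unfolding Cset_def Bset_def Omega_def ray_def by auto
qed

lemma mult_sub_pos_if_notin_image:
  assumes "umin \<le> 0" "0 \<le> umax" "b < 0" "b \<notin> (\<lambda>u. \<alpha> * u) ` Omega umin umax"
    and "u \<in> Omega umin umax"
  shows "u * \<alpha> - b > 0"
proof (rule ccontr)
  assume "\<not> u * \<alpha> - b > 0"
  then have ub: "u * \<alpha> \<le> b" by simp
  with assms(3) have "\<alpha> \<noteq> 0" by auto
  have "b / \<alpha> \<in> Omega umin umax"
  proof (cases "\<alpha> > 0")
    case True
    then have "u \<le> b / \<alpha>" "b / \<alpha> < 0"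
      using ub assms(3) by (simp_all add: pos_le_divide_eq divide_neg_pos)
    then show ?thesis using assms(2,5) unfolding Omega_def by auto
  next
    case False
    with \<open>\<alpha> \<noteq> 0\<close> have "\<alpha> < 0" by simp
    then have "b / \<alpha> \<le> u" "b / \<alpha> > 0"
      using ub assms(3) by (simp_all add: neg_divide_le_eq divide_neg_neg)
    then show ?thesis using assms(1,5) unfolding Omega_def by auto
  qed
  moreover have "b = \<alpha> * (b / \<alpha>)"
    using \<open>\<alpha> \<noteq> 0\<close> by simp
  ultimately show False
    using assms(4) by blast
qed

lemma Cset_eq_sector:
  assumes "umin < 0" "0 < umax" "b < 0" "b \<notin> (\<lambda>u. \<alpha> * u) ` Omega umin umax"
  shows "Cset \<alpha> b umin umax = {p \<in> G. slope \<alpha> b umin * fst p \<le> snd p \<and> snd p \<le> slope \<alpha> b umax * fst p}"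
proof -
  have "umin * \<alpha> - b > 0" "umax * \<alpha> - b > 0"
    using mult_sub_pos_if_notin_image[of umin umax b \<alpha>] assms by (simp_all add: Omega_def)
  then show ?thesis
    using assms by (simp add: Cset_eq_cone)
qed

lemma Cset_eq_below_ray:
  assumes "umin < 0" "0 < umax" "b < 0" "\<alpha> > 0" "b \<in> (\<lambda>u. \<alpha> * u) ` Omega umin umax"
  shows "Cset \<alpha> b umin umax = {p \<in> G. snd p \<le> slope \<alpha> b umax * fst p}"
proof -
  obtain w where "umin \<le> w" "b = \<alpha> * w"
    using assms(5) unfolding Omega_def by auto
  then have "\<not> umin * \<alpha> - b > 0"
    using assms(4) by (simp add: mult.commute mult_right_mono)
  moreover have "umax * \<alpha> - b > 0"
    using assms(2-4) mult_pos_pos[of umax \<alpha>] by linarith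
  ultimately show ?thesis
    using assms by (simp add: Cset_eq_cone)
qed

lemma Cset_eq_above_ray:
  assumes "umin < 0" "0 < umax" "b < 0" "\<alpha> < 0" "b \<in> (\<lambda>u. \<alpha> * u) ` Omega umin umax"
  shows "Cset \<alpha> b umin umax = {p \<in> G. snd p \<ge> slope \<alpha> b umin * fst p}"
proof -
  obtain w where "w \<le> umax" "b = \<alpha> * w"
    using assms(5) unfolding Omega_def by auto
  then have "\<not> umax * \<alpha> - b > 0"
    using assms(4) by (simp add: mult.commute mult_right_mono_neg)
  moreover have "umin * \<alpha> - b > 0"
    using assms(1,3,4) mult_neg_neg[of umin \<alpha>] by linarith
  ultimately show ?thesis
    using assms by (simp add: Cset_eq_cone)
qed

section \<open>Invariance and reachability\<close>

lemma sol_deviation_has_integral: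
  assumes "bounded_piecewise_constant u" "t \<ge> 0" "v * \<alpha> - b \<noteq> 0"
  defines "m \<equiv> slope \<alpha> b v"
  shows "((\<lambda>s. b * (v - u s) / (v * \<alpha> - b) * (exp (- b * s) * sol_x \<alpha> u (fst p) s)) has_integral
      exp (- b * t) * (snd (sol \<alpha> b u p t) - m * fst (sol \<alpha> b u p t)) - (snd p - m * fst p)) {0..t}"
proof -
  obtain S where S: "finite S"
    "continuous_on {0..t} (control_integral u)" "continuous_on {0..t} (sol_v \<alpha> b u (fst p))"
    "\<And>s. s \<in> {0<..<t} - S \<Longrightarrow> (control_integral u has_real_derivative u s) (at s)"
    "\<And>s. s \<in> {0<..<t} - S \<Longrightarrow>
       (sol_v \<alpha> b u (fst p) has_real_derivative u s * (exp (- b * s) * sol_x \<alpha> u (fst p) s)) (at s)"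
    by (rule sol_components_has_derivative[OF assms(1)]) blast
  define w where "w = (\<lambda>s. sol_v \<alpha> b u (fst p) s - m * (exp (- b * s) * sol_x \<alpha> u (fst p) s))"
  have "((\<lambda>s. b * (v - u s) / (v * \<alpha> - b) * (exp (- b * s) * sol_x \<alpha> u (fst p) s)) has_integral w t - w 0) {0..t}"
  proof (rule fundamental_theorem_of_calculus_interior_strong[OF S(1) assms(2)])
    show "continuous_on {0..t} w"
      unfolding w_def sol_x_def by (intro continuous_intros S(2,3))
    fix s
    assume s: "s \<in> {0<..<t} - S"
    have dX: "(sol_x \<alpha> u (fst p) has_real_derivative u s * \<alpha> * sol_x \<alpha> u (fst p) s) (at s)"
      unfolding sol_x_def by (rule derivative_eq_intros S(4)[OF s] refl | simp)+
    have "(w has_real_derivative u s * (exp (- b * s) * sol_x \<alpha> u (fst p) s) -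
        m * (exp (- b * s) * (- b) * sol_x \<alpha> u (fst p) s + exp (- b * s) * (u s * \<alpha> * sol_x \<alpha> u (fst p) s))) (at s)"
      unfolding w_def by (rule derivative_eq_intros S(5)[OF s] dX refl | simp)+
    moreover have "u s * (exp (- b * s) * sol_x \<alpha> u (fst p) s) -
        m * (exp (- b * s) * (- b) * sol_x \<alpha> u (fst p) s + exp (- b * s) * (u s * \<alpha> * sol_x \<alpha> u (fst p) s))
      = (u s - m * u s * \<alpha> + m * b) * (exp (- b * s) * sol_x \<alpha> u (fst p) s)"
      by (simp add: algebra_simps)
    ultimately show "(w has_vector_derivative b * (v - u s) / (v * \<alpha> - b) * (exp (- b * s) * sol_x \<alpha> u (fst p) s)) (at s)"
      unfolding has_real_derivative_iff_has_vector_derivative[symmetric] m_def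
        slope_deviation_factor[OF assms(3)] by simp
  qed
  moreover have "w t - w 0 = exp (- b * t) * (snd (sol \<alpha> b u p t) - m * fst (sol \<alpha> b u p t)) - (snd p - m * fst p)"
    by (simp add: w_def sol_def sol_y_def sol_x_def sol_v_def control_integral_def exp_minus field_simps)
  ultimately show ?thesis by simp
qed

lemma sol_below_line:
  assumes "bounded_piecewise_constant u" "t \<ge> 0" "b < 0" "v * \<alpha> - b > 0" "\<And>s. u s \<le> v"
    and "fst p > 0" "snd p \<le> slope \<alpha> b v * fst p"
  shows "snd (sol \<alpha> b u p t) \<le> slope \<alpha> b v * fst (sol \<alpha> b u p t)"
proof -
  let ?m = "slope \<alpha> b v"
  have ne: "v * \<alpha> - b \<noteq> 0"
    using assms(4) by simp
  have "b * (v - u s) / (v * \<alpha> - b) * (exp (- b * s) * sol_x \<alpha> u (fst p) s) \<le> 0" for s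
    using assms(3-5) sol_x_pos[OF assms(6)]
    by (intro mult_nonpos_nonneg divide_nonpos_pos mult_nonpos_nonneg) (auto simp: less_imp_le)
  then have "exp (- b * t) * (snd (sol \<alpha> b u p t) - ?m * fst (sol \<alpha> b u p t)) - (snd p - ?m * fst p) \<le> 0"
    using has_integral_le[OF sol_deviation_has_integral[OF assms(1,2) ne, of p] has_integral_0] by force
  then have "exp (- b * t) * (snd (sol \<alpha> b u p t) - ?m * fst (sol \<alpha> b u p t)) \<le> 0"
    using assms(7) by linarith
  then show ?thesis
    by (simp add: mult_le_0_iff)
qed

lemma sol_above_line:
  assumes "bounded_piecewise_constant u" "t \<ge> 0" "b < 0" "v * \<alpha> - b > 0" "\<And>s. v \<le> u s"
    and "fst p > 0" "slope \<alpha> b v * fst p \<le> snd p"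
  shows "slope \<alpha> b v * fst (sol \<alpha> b u p t) \<le> snd (sol \<alpha> b u p t)"
proof -
  let ?m = "slope \<alpha> b v"
  have ne: "v * \<alpha> - b \<noteq> 0"
    using assms(4) by simp
  have "b * (v - u s) / (v * \<alpha> - b) * (exp (- b * s) * sol_x \<alpha> u (fst p) s) \<ge> 0" for s
    using assms(3-5) sol_x_pos[OF assms(6)]
    by (intro mult_nonneg_nonneg divide_nonneg_pos mult_nonpos_nonpos) (auto simp: less_imp_le)
  then have "exp (- b * t) * (snd (sol \<alpha> b u p t) - ?m * fst (sol \<alpha> b u p t)) - (snd p - ?m * fst p) \<ge> 0"
    using has_integral_nonneg[OF sol_deviation_has_integral[OF assms(1,2) ne, of p]] by force
  then have "exp (- b * t) * (snd (sol \<alpha> b u p t) - ?m * fst (sol \<alpha> b u p t)) \<ge> 0"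
    using assms(7) by linarith
  then show ?thesis
    by (simp add: zero_le_mult_iff)
qed

lemma Cset_positively_invariant:
  assumes "umin \<le> 0" "0 \<le> umax" "b < 0"
    and "p \<in> Cset \<alpha> b umin umax" "t \<ge> 0" "admissible umin umax u"
  shows "phi \<alpha> b t p u \<in> Cset \<alpha> b umin umax"
proof -
  have u: "bounded_piecewise_constant u" "\<And>s. umin \<le> u s" "\<And>s. u s \<le> umax"
    using admissible_imp_bounded_piecewise_constant[OF assms(6)] assms(6)
    by (auto simp: admissible_def Omega_def)
  have p: "fst p > 0"
    "umin * \<alpha> - b > 0 \<Longrightarrow> slope \<alpha> b umin * fst p \<le> snd p"
    "umax * \<alpha> - b > 0 \<Longrightarrow> snd p \<le> slope \<alpha> b umax * fst p"
    using assms(4) unfolding Cset_eq_cone[OF assms(1-3)] by (auto simp: G_def)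
  show ?thesis
    unfolding phi_eq_sol[OF u(1) assms(5)] Cset_eq_cone[OF assms(1-3)]
    using sol_x_pos[OF p(1)] sol_below_line[OF u(1) assms(5,3) _ u(3) p(1,3)]
      sol_above_line[OF u(1) assms(5,3) _ u(2) p(1,2)]
    by (simp add: G_def sol_def)
qed

lemma ray_reachable_by_const_control:
  assumes "b < 0" "u1 \<in> interior (Bset \<alpha> b umin umax)" "u2 \<in> interior (Bset \<alpha> b umin umax)" "u1 \<noteq> u2"
  shows "\<exists>t0>0. \<exists>c \<in> Omega umin umax. (\<lambda>p. phi \<alpha> b t0 p (\<lambda>_. c)) ` ray \<alpha> b u1 = ray \<alpha> b u2"
proof -
  have B: "u1 * \<alpha> - b > 0" "u2 * \<alpha> - b > 0"
    using assms(2,3) interior_subset unfolding Bset_def by blast+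
  obtain e where e: "e > 0" "ball u2 e \<subseteq> Bset \<alpha> b umin umax"
    using assms(3) mem_interior by blast
  define c where "c = (if u2 < u1 then u2 - e / 2 else u2 + e / 2)"
  have "c \<in> ball u2 e"
    using e(1) by (simp add: c_def dist_real_def)
  then have c: "c \<in> Omega umin umax" "c * \<alpha> - b > 0"
    using e(2) unfolding Bset_def by auto
  define m1 where "m1 = slope \<alpha> b u1"
  define m2 where "m2 = slope \<alpha> b u2"
  define mc where "mc = slope \<alpha> b c"
  define r where "r = (m2 - mc) / (m1 - mc)"
  \<comment> \<open>c lies beyond u2 as seen from u1, so m2 lies strictly between mc and m1\<close>
  have "mc < m2 \<and> m2 < m1 \<or> m1 < m2 \<and> m2 < mc"
    using slope_less_iff[OF assms(1)] B c(2) e(1) assms(4)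
    unfolding m1_def m2_def mc_def c_def by (cases "u2 < u1") auto
  then have r: "0 < r" "r < 1" "mc + (m1 - mc) * r = m2"
    unfolding r_def by (auto simp: zero_less_divide_iff divide_less_eq_1)
  define t0 where "t0 = ln r / (b - c * \<alpha>)"
  have t0: "t0 > 0" "exp ((b - c * \<alpha>) * t0) = r"
    using r(1,2) c(2) by (simp_all add: t0_def divide_neg_neg)
  have "(\<lambda>p. phi \<alpha> b t0 p (\<lambda>_. c)) ` ray \<alpha> b u1 = (\<lambda>p. const_flow \<alpha> b c p t0) ` ray \<alpha> b u1"
    using phi_const[of c \<alpha> b t0] c(2) t0(1) by simp
  also have "\<dots> = ray \<alpha> b u2"
    unfolding ray_def const_flow_image_line t0(2) using r(3) by (simp add: m1_def m2_def mc_def)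
  finally show ?thesis
    using t0(1) c(1) by blast
qed

theorem mainTheorem9:
  fixes \<alpha> b umin umax :: real
  assumes "umin < 0" and "0 < umax" and "\<alpha> \<noteq> 0" and "b < 0"
  shows
    "(b \<notin> (\<lambda>u. \<alpha> * u) ` Omega umin umax \<longrightarrow>
        Cset \<alpha> b umin umax =
          {p \<in> G. slope \<alpha> b umin * fst p \<le> snd p \<and> snd p \<le> slope \<alpha> b umax * fst p})
   \<and> (b \<in> (\<lambda>u. \<alpha> * u) ` Omega umin umax \<longrightarrow>
        (\<alpha> > 0 \<longrightarrow> Cset \<alpha> b umin umax = {p \<in> G. snd p \<le> slope \<alpha> b umax * fst p}) \<and>
        (\<alpha> < 0 \<longrightarrow> Cset \<alpha> b umin umax = {p \<in> G. snd p \<ge> slope \<alpha> b umin * fst p}))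
   \<and> (\<forall>u1 \<in> interior (Bset \<alpha> b umin umax). \<forall>u2 \<in> interior (Bset \<alpha> b umin umax).
        u1 \<noteq> u2 \<longrightarrow>
        (\<exists>t0 > 0. \<exists>u \<in> Omega umin umax.
           (\<lambda>p. phi \<alpha> b t0 p (\<lambda>_. u)) ` ray \<alpha> b u1 = ray \<alpha> b u2))
   \<and> (\<forall>p \<in> Cset \<alpha> b umin umax. \<forall>t \<ge> 0. \<forall>u. admissible umin umax u \<longrightarrow>
        phi \<alpha> b t p u \<in> Cset \<alpha> b umin umax)"
  using Cset_eq_sector[OF assms(1,2,4)] Cset_eq_below_ray[OF assms(1,2,4)]
    Cset_eq_above_ray[OF assms(1,2,4)] ray_reachable_by_const_control[OF assms(4)]
    Cset_positively_invariant[of umin umax b] assms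
  by auto

end
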